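(* Let $\mathbb F$ be a field. The $\mathsf p$-family $(\mathrm{HC}^2)=(\mathrm{HC}_n^2)_{n\in\mathbb N}$ does not lie in $\mathrm{VNPC}(\trianglelefteq_{\mathsf p})$, i.e. $(\mathrm{HC})\not\trianglelefteq_{\mathsf p}(\mathrm{HC}^2)$.
   Context: $\varepsilon$ is a new indeterminate. A $\mathsf p$-family $(f)=(f_n)_{n\in\mathbb N}$ is a sequence of multivariate polynomials whose number of variables and degree are polynomially bounded in $n$. For polynomials over a field $K$, $f\le g$ (projection) means $f=g(\alpha_1,\dots,\alpha_M)$ where each $\alpha_i$ is a variable of $f$ or an element of $K$. For $f,g$ over $\mathbb F$, $f\trianglelefteq g$ if $f+\varepsilon h\le g$ (projection over $\mathbb F(\varepsilon)$) for some polynomial $h$ over $\mathbb F[\varepsilon]$; $(f)\trianglelefteq_{\mathsf p}(g)$ if there is a polynomially bounded $t:\mathbb N\to\mathbb N$ with $f_n\trianglelefteq g_{t(n)}$ for all $n$. $\mathrm{HC}_n=\sum_{\pi}\prod_{i=1}^n x_{i,\pi(i)}$, summing over permutations $\pi$ of $\{1,\dots,n\}$ that are $n$-cycles. $\mathrm{VNP}$ is the set of $\mathsf p$-families $(f)$ with $(f)\le_{\mathsf p}(\mathrm{HC})$ (where $(f)\le_{\mathsf p}(g)$ means $f_n\le g_{t(n)}$ for a polynomially bounded $t$), and $\mathrm{VNPC}(\trianglelefteq_{\mathsf p})=\{(f)\in\mathrm{VNP}:(\mathrm{HC})\trianglelefteq_{\mathsf p}(f)\}$. *)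

theory Defs
  imports "HOL-Library.Poly_Mapping" "HOL-Computational_Algebra.Polynomial"
    "HOL-Computational_Algebra.Fraction_Field" "HOL-Combinatorics.Permutations"
begin

type_synonym ('v, 'k) mpoly = "('v \<Rightarrow>\<^sub>0 nat) \<Rightarrow>\<^sub>0 'k"

definition mvar :: "'v \<Rightarrow> ('v, 'k::comm_ring_1) mpoly" where
  "mvar v = Poly_Mapping.single (Poly_Mapping.single v 1) 1"

definition mconst :: "'k::comm_ring_1 \<Rightarrow> ('v, 'k) mpoly" where
  "mconst c = Poly_Mapping.single 0 c"

definition mvars :: "('v, 'k::zero) mpoly \<Rightarrow> 'v set" where
  "mvars p = (\<Union>m\<in>Poly_Mapping.keys p. Poly_Mapping.keys m)"

definition msubst :: "('w \<Rightarrow> ('v, 'k::comm_ring_1) mpoly) \<Rightarrow> ('w, 'k) mpoly \<Rightarrow> ('v, 'k) mpoly" where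
  "msubst \<sigma> p = (\<Sum>m\<in>Poly_Mapping.keys p. mconst (Poly_Mapping.lookup p m) * (\<Prod>w\<in>Poly_Mapping.keys m. \<sigma> w ^ Poly_Mapping.lookup m w))"

text \<open>Projection f \<le> g: f = g(\<alpha>_1,...,\<alpha>_M) where each \<alpha>_i is a variable of f
  (from the variable set X of f) or a constant of K.\<close>
definition proj_le :: "'v set \<Rightarrow> ('v, 'k::comm_ring_1) mpoly \<Rightarrow> ('w, 'k) mpoly \<Rightarrow> bool" where
  "proj_le X f g \<longleftrightarrow> (\<exists>\<sigma>. (\<forall>w. (\<exists>v\<in>X. \<sigma> w = mvar v) \<or> (\<exists>c. \<sigma> w = mconst c)) \<and> f = msubst \<sigma> g)"

text \<open>The field F(\<epsilon>) of rational functions is 'a poly fract; F and F[\<epsilon>] embed into it.\<close>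
definition eps :: "'a::field poly fract" where
  "eps = Fract [:0, 1:] 1"

definition emb_F :: "('v, 'a::field) mpoly \<Rightarrow> ('v, 'a poly fract) mpoly" where
  "emb_F p = Poly_Mapping.map (\<lambda>c. Fract [:c:] 1) p"

definition emb_Feps :: "('v, 'a::field poly) mpoly \<Rightarrow> ('v, 'a poly fract) mpoly" where
  "emb_Feps p = Poly_Mapping.map (\<lambda>c. Fract c 1) p"

definition border_le :: "'v set \<Rightarrow> ('v, 'a::field) mpoly \<Rightarrow> ('w, 'a) mpoly \<Rightarrow> bool" where
  "border_le X f g \<longleftrightarrow> (\<exists>h :: ('v, 'a poly) mpoly. mvars h \<subseteq> X \<and>
      proj_le X (emb_F f + mconst eps * emb_Feps h) (emb_F g))"

definition poly_bounded :: "(nat \<Rightarrow> nat) \<Rightarrow> bool" where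
  "poly_bounded t \<longleftrightarrow> (\<exists>c k. \<forall>n. t n \<le> c * n ^ k + c)"

definition hc_vars :: "nat \<Rightarrow> (nat \<times> nat) set" where
  "hc_vars n = {1..n} \<times> {1..n}"

definition is_ncycle :: "nat \<Rightarrow> (nat \<Rightarrow> nat) \<Rightarrow> bool" where
  "is_ncycle n \<pi> \<longleftrightarrow> \<pi> permutes {1..n} \<and> (\<forall>i\<in>{1..n}. \<forall>j\<in>{1..n}. \<exists>k. (\<pi> ^^ k) i = j)"

definition HC :: "nat \<Rightarrow> (nat \<times> nat, 'a::field) mpoly" where
  "HC n = (\<Sum>\<pi>\<in>{\<pi>. is_ncycle n \<pi>}. \<Prod>i\<in>{1..n}. mvar (i, \<pi> i))"

definition border_p_le :: "(nat \<Rightarrow> 'v set) \<Rightarrow> (nat \<Rightarrow> ('v, 'a::field) mpoly) \<Rightarrow> (nat \<Rightarrow> ('w, 'a) mpoly) \<Rightarrow> bool" where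
  "border_p_le X f g \<longleftrightarrow> (\<exists>t. poly_bounded t \<and> (\<forall>n. border_le (X n) (f n) (g (t n))))"

end

theory Submission
  imports Defs "HOL-Computational_Algebra.Polynomial_Factorial"
begin

(* If x_11 + \<epsilon> h is a projection of HC_m^2 over
   F(\<epsilon>), then evaluating every variable at a fresh indeterminate X yields X + \<epsilon> H = P^2 in
   F(\<epsilon>)[X] with H in F[\<epsilon>][X]. Clearing denominators gives d^2 (X + \<epsilon> H) = Q^2 over F[\<epsilon>].
   Modulo \<epsilon> this reads d(0)^2 X = Q(0)^2, impossible by degree parity unless \<epsilon> divides d
   and every coefficient of Q; then \<epsilon>^2 cancels and we descend on the degree of d. *)

locale comm_ring_hom =
  fixes hom :: "'a::comm_ring_1 \<Rightarrow> 'b::comm_ring_1"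
  assumes hom_add: "hom (x + y) = hom x + hom y"
    and hom_mult: "hom (x * y) = hom x * hom y"
    and hom_one: "hom 1 = 1"
begin

lemma hom_zero: "hom 0 = 0"
  using hom_add[of 0 0] by simp

lemma hom_sum: "hom (sum f A) = (\<Sum>i\<in>A. hom (f i))"
  by (induction A rule: infinite_finite_induct) (simp_all add: hom_zero hom_add)

lemma hom_prod: "hom (prod f A) = (\<Prod>i\<in>A. hom (f i))"
  by (induction A rule: infinite_finite_induct) (simp_all add: hom_one hom_mult)

lemma hom_power: "hom (x ^ n) = hom x ^ n"
  by (induction n) (simp_all add: hom_one hom_mult)

lemma map_poly_hom_mult: "map_poly hom (p * q) = map_poly hom p * map_poly hom q"
  by (intro poly_eqI) (simp add: coeff_map_poly coeff_mult hom_zero hom_sum hom_mult)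

lemma map_poly_hom_power: "map_poly hom (p ^ n) = map_poly hom p ^ n"
  by (induction n) (simp_all add: hom_one map_poly_hom_mult)

lemma map_poly_hom_smult: "map_poly hom (smult c p) = smult (hom c) (map_poly hom p)"
  by (rule map_poly_smult) (simp_all add: hom_zero hom_mult)

end

lemma comm_ring_hom_compose:
  "comm_ring_hom f \<Longrightarrow> comm_ring_hom g \<Longrightarrow> comm_ring_hom (g \<circ> f)"
  by (simp add: comm_ring_hom_def)

lemma comm_ring_hom_const_poly: "comm_ring_hom (\<lambda>c. [:c:])"
  by unfold_locales simp_all

lemma comm_ring_hom_poly_at: "comm_ring_hom (\<lambda>p. poly p x)"
  by unfold_locales simp_all

lemma comm_ring_hom_to_fract: "comm_ring_hom to_fract"
  by unfold_locales simp_all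

lemma comm_ring_hom_fract_poly: "comm_ring_hom fract_poly"
  by unfold_locales simp_all

definition monomial_eval :: "('v \<Rightarrow> 'b::comm_semiring_1) \<Rightarrow> ('v \<Rightarrow>\<^sub>0 nat) \<Rightarrow> 'b" where
  "monomial_eval a m = (\<Prod>v\<in>Poly_Mapping.keys m. a v ^ Poly_Mapping.lookup m v)"

definition mpoly_eval :: "('k::zero \<Rightarrow> 'b::comm_ring_1) \<Rightarrow> ('v \<Rightarrow> 'b) \<Rightarrow> ('v, 'k) mpoly \<Rightarrow> 'b" where
  "mpoly_eval \<phi> a p = (\<Sum>m\<in>Poly_Mapping.keys p. \<phi> (Poly_Mapping.lookup p m) * monomial_eval a m)"

lemma msubst_eq_mpoly_eval: "msubst = mpoly_eval mconst"
  by (simp add: fun_eq_iff msubst_def mpoly_eval_def monomial_eval_def)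

lemma monomial_eval_superset:
  assumes "finite S" "Poly_Mapping.keys m \<subseteq> S"
  shows "monomial_eval a m = (\<Prod>v\<in>S. a v ^ Poly_Mapping.lookup m v)"
  unfolding monomial_eval_def
  by (rule prod.mono_neutral_left[OF assms]) (auto simp: in_keys_iff)

lemma monomial_eval_add: "monomial_eval a (m + n) = monomial_eval a m * monomial_eval a n"
proof -
  let ?S = "Poly_Mapping.keys m \<union> Poly_Mapping.keys n"
  have S: "finite ?S" "Poly_Mapping.keys (m + n) \<subseteq> ?S"
    by (simp_all add: keys_add)
  show ?thesis
    by (simp add: monomial_eval_superset[OF S] monomial_eval_superset[OF S(1), of m]
        monomial_eval_superset[OF S(1), of n] lookup_add power_add prod.distrib)
qed

lemma monomial_eval_zero [simp]: "monomial_eval a 0 = 1"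
  by (simp add: monomial_eval_def)

lemma mpoly_eval_zero [simp]: "mpoly_eval \<phi> a 0 = 0"
  by (simp add: mpoly_eval_def)

lemma mpoly_eval_superset:
  assumes "\<phi> 0 = 0" "finite S" "Poly_Mapping.keys p \<subseteq> S"
  shows "mpoly_eval \<phi> a p = (\<Sum>m\<in>S. \<phi> (Poly_Mapping.lookup p m) * monomial_eval a m)"
  unfolding mpoly_eval_def
  by (rule sum.mono_neutral_left[OF assms(2,3)]) (auto simp: in_keys_iff assms(1))

lemma mpoly_eval_single:
  "\<phi> 0 = 0 \<Longrightarrow> mpoly_eval \<phi> a (Poly_Mapping.single m c) = \<phi> c * monomial_eval a m"
  by (subst mpoly_eval_superset[where S = "{m}"]) auto

lemma mpoly_eval_mconst: "\<phi> 0 = 0 \<Longrightarrow> mpoly_eval \<phi> a (mconst c) = \<phi> c"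
  by (simp add: mconst_def mpoly_eval_single)

lemma mpoly_eval_mvar: "\<phi> 0 = 0 \<Longrightarrow> \<phi> 1 = 1 \<Longrightarrow> mpoly_eval \<phi> a (mvar v) = a v"
  by (simp add: mvar_def mpoly_eval_single monomial_eval_def)

lemma mpoly_eval_map:
  assumes "\<phi> 0 = 0" "f 0 = 0"
  shows "mpoly_eval \<phi> a (Poly_Mapping.map f p) = mpoly_eval (\<phi> \<circ> f) a p"
proof -
  have lookup: "Poly_Mapping.lookup (Poly_Mapping.map f p) m = f (Poly_Mapping.lookup p m)" for m
    using assms(2) by transfer (auto simp: when_def)
  have "Poly_Mapping.keys (Poly_Mapping.map f p) \<subseteq> Poly_Mapping.keys p"
    by (auto simp: in_keys_iff lookup assms(2))
  then show ?thesis
    by (simp add: mpoly_eval_superset[where \<phi> = \<phi>, OF assms(1) finite_keys] lookup)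
       (simp add: mpoly_eval_def)
qed

lemma poly_mapping_sum_single:
  "p = (\<Sum>m\<in>Poly_Mapping.keys p. Poly_Mapping.single m (Poly_Mapping.lookup p m))"
  by (rule poly_mapping_eqI)
     (auto simp: lookup_sum lookup_single when_def in_keys_iff sum.delta' split: if_splits)

context comm_ring_hom
begin

lemma hom_mpoly_eval: "hom (mpoly_eval \<phi> a p) = mpoly_eval (hom \<circ> \<phi>) (hom \<circ> a) p"
  by (simp add: mpoly_eval_def monomial_eval_def hom_sum hom_prod hom_power hom_mult)

lemma mpoly_eval_add: "mpoly_eval hom a (p + q) = mpoly_eval hom a p + mpoly_eval hom a q"
proof -
  let ?S = "Poly_Mapping.keys p \<union> Poly_Mapping.keys q"
  have S: "finite ?S" "Poly_Mapping.keys (p + q) \<subseteq> ?S"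
    by (simp_all add: keys_add)
  show ?thesis
    by (simp add: mpoly_eval_superset[where \<phi> = hom, OF hom_zero S]
        mpoly_eval_superset[where \<phi> = hom, OF hom_zero S(1), of p]
        mpoly_eval_superset[where \<phi> = hom, OF hom_zero S(1), of q]
        lookup_add hom_add distrib_right sum.distrib)
qed

lemma mpoly_eval_sum: "mpoly_eval hom a (sum f A) = (\<Sum>i\<in>A. mpoly_eval hom a (f i))"
  by (induction A rule: infinite_finite_induct) (simp_all add: mpoly_eval_add)

lemma mpoly_eval_mult: "mpoly_eval hom a (p * q) = mpoly_eval hom a p * mpoly_eval hom a q"
proof -
  have "p * q = (\<Sum>m\<in>Poly_Mapping.keys p. \<Sum>n\<in>Poly_Mapping.keys q.
      Poly_Mapping.single (m + n) (Poly_Mapping.lookup p m * Poly_Mapping.lookup q n))"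
    by (subst poly_mapping_sum_single[of p], subst poly_mapping_sum_single[of q])
       (simp add: sum_product mult_single)
  then show ?thesis
    by (simp add: mpoly_eval_sum mpoly_eval_single hom_zero hom_mult monomial_eval_add)
       (simp add: mpoly_eval_def sum_product mult_ac)
qed

lemma comm_ring_hom_mpoly_eval: "comm_ring_hom (mpoly_eval hom a)"
proof
  show "mpoly_eval hom a 1 = 1"
    using mpoly_eval_single[of hom a 0 1] by (simp add: hom_zero hom_one)
qed (simp_all add: mpoly_eval_add mpoly_eval_mult)

end

lemma fract_poly_clear_denominators:
  fixes P :: "'a::idom fract poly"
  obtains d Q where "d \<noteq> 0" "smult (to_fract d) P = fract_poly Q"
proof (induction P arbitrary: thesis)
  case 0
  show ?case by (rule 0[of 1 0]) simp_all
next
  case (pCons z P)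
  obtain d Q where dQ: "d \<noteq> 0" "smult (to_fract d) P = fract_poly Q"
    using pCons.IH by blast
  obtain a b where z: "z = Fract a b" "b \<noteq> 0"
    by (cases z) auto
  have "to_fract (b * d) * z = to_fract (a * d)"
    using z dQ(1) by (simp add: to_fract_def eq_fract)
  then have "smult (to_fract (b * d)) (pCons z P) =
      pCons (to_fract (a * d)) (smult (to_fract b) (smult (to_fract d) P))"
    by (simp add: mult_ac)
  also have "\<dots> = fract_poly (pCons (a * d) (smult b Q))"
    using dQ(2) by (simp add: map_poly_pCons)
  finally have "smult (to_fract (b * d)) (pCons z P) = fract_poly (pCons (a * d) (smult b Q))" .
  then show ?case
    using z(2) dQ(1) by (intro pCons.prems[of "b * d"]) simp_all
qed

(* In 'a poly poly = F[\<epsilon>][X] the inner variable is \<epsilon>, and map_poly (\<lambda>c. poly c 0)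
   is reduction modulo \<epsilon>. *)

lemma smult_square_neq_square_if_odd_reduction:
  fixes G Q :: "'a::field poly poly"
  assumes odd: "odd (degree (map_poly (\<lambda>c. poly c 0) G))"
  shows "d \<noteq> 0 \<Longrightarrow> smult (d ^ 2) G \<noteq> Q ^ 2"
proof (induction "degree d" arbitrary: d Q rule: less_induct)
  case less
  interpret eval_0: comm_ring_hom "\<lambda>c::'a poly. poly c 0"
    by (rule comm_ring_hom_poly_at)
  let ?reduce = "map_poly (\<lambda>c::'a poly. poly c 0)"
  show ?case
  proof
    assume eq: "smult (d ^ 2) G = Q ^ 2"
    then have reduced: "smult (poly d 0 ^ 2) (?reduce G) = ?reduce Q ^ 2"
      by (metis eval_0.map_poly_hom_smult eval_0.map_poly_hom_power poly_power)
    show False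
    proof (cases "poly d 0 = 0")
      case False
      then have "degree (?reduce Q ^ 2) = degree (?reduce G)"
        by (simp flip: reduced)
      moreover have "even (degree (?reduce Q ^ 2))"
        by (cases "?reduce Q = 0") (simp_all add: degree_power_eq)
      ultimately show False
        using odd by simp
    next
      case True
      then obtain d' where d: "d = [:0, 1:] * d'"
        using poly_eq_0_iff_dvd[of d 0] by auto
      with less.prems have "d' \<noteq> 0" "degree d' < degree d"
        by (auto simp: degree_mult_eq)
      from True reduced have "?reduce Q = 0"
        by simp
      then have "\<forall>n. [:0, 1:] dvd coeff Q n"
        by (metis coeff_0 coeff_map_poly eval_0.hom_zero poly_eq_0_iff_dvd minus_zero)
      then have "[:[:0, 1:]:] dvd Q"
        by (simp add: const_poly_dvd_iff)
      then obtain Q' where Q: "Q = smult [:0, 1:] Q'"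
        by auto
      have "smult ([:0, 1:] ^ 2) (smult (d' ^ 2) G) = smult ([:0, 1:] ^ 2) (Q' ^ 2)"
        using eq unfolding d Q by (simp only: smult_smult smult_power power_mult_distrib)
      then have "smult (d' ^ 2) G = Q' ^ 2"
        by (rule smult_cancel[rotated]) simp
      with less.hyps \<open>d' \<noteq> 0\<close> \<open>degree d' < degree d\<close> show False
        by blast
    qed
  qed
qed

lemma fract_poly_neq_square_if_odd_reduction:
  fixes G :: "'a::field poly poly"
  assumes "odd (degree (map_poly (\<lambda>c. poly c 0) G))"
  shows "fract_poly G \<noteq> P ^ 2"
proof
  assume eq: "fract_poly G = P ^ 2"
  obtain d Q where "d \<noteq> 0" and Q: "smult (to_fract d) P = fract_poly Q"
    by (rule fract_poly_clear_denominators)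
  interpret to_fract: comm_ring_hom "to_fract :: 'a poly \<Rightarrow> 'a poly fract"
    by (rule comm_ring_hom_to_fract)
  have "fract_poly (smult (d ^ 2) G) = smult (to_fract d ^ 2) (P ^ 2)"
    by (simp add: eq to_fract.hom_power)
  also have "\<dots> = fract_poly (Q ^ 2)"
    by (simp add: to_fract.map_poly_hom_power smult_power flip: Q)
  finally have "fract_poly (smult (d ^ 2) G) = fract_poly (Q ^ 2)" .
  then have "smult (d ^ 2) G = Q ^ 2"
    by (simp only: fract_poly_eq_iff)
  with smult_square_neq_square_if_odd_reduction[OF assms \<open>d \<noteq> 0\<close>] show False
    by blast
qed

lemma reduction_X_plus_smult_eps:
  "map_poly (\<lambda>c. poly c 0) ([:0, 1:] + smult [:0, 1:] H) = ([:0, 1:] :: 'a::comm_ring_1 poly)"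
  by (intro poly_eqI) (simp add: coeff_map_poly coeff_pCons split: nat.split)

lemma emb_F_eq_map: "emb_F = Poly_Mapping.map (\<lambda>c. to_fract [:c:])"
  by (simp add: fun_eq_iff emb_F_def to_fract_def)

lemma emb_Feps_eq_map: "emb_Feps = Poly_Mapping.map to_fract"
  by (simp add: fun_eq_iff emb_Feps_def to_fract_def[abs_def])

lemma border_le_square_evaluation:
  fixes f :: "('v, 'a::field) mpoly" and g :: "('w, 'a) mpoly"
  assumes "border_le X f (g ^ 2)"
  obtains H :: "'a poly poly" and P :: "'a poly fract poly"
  where "fract_poly (mpoly_eval (\<lambda>c. [:[:c:]:]) (\<lambda>_. [:0, 1:]) f + smult [:0, 1:] H) = P ^ 2"
proof -
  from assms obtain h \<sigma> where eq: "emb_F f + mconst eps * emb_Feps h = msubst \<sigma> (emb_F (g ^ 2))"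
    unfolding border_le_def proj_le_def by blast
  interpret const: comm_ring_hom "\<lambda>c::'a poly fract. [:c:]"
    by (rule comm_ring_hom_const_poly)
  interpret fract_poly: comm_ring_hom "fract_poly :: 'a poly poly \<Rightarrow> _"
    by (rule comm_ring_hom_fract_poly)
  define E :: "('v, 'a poly fract) mpoly \<Rightarrow> 'a poly fract poly"
    where "E = mpoly_eval (\<lambda>c. [:c:]) (\<lambda>_. [:0, 1:])"
  interpret E: comm_ring_hom E
    unfolding E_def by (rule const.comm_ring_hom_mpoly_eval)
  define \<psi> :: "'a \<Rightarrow> 'a poly fract poly" where "\<psi> = (\<lambda>c. [:to_fract [:c:]:])"
  interpret \<psi>: comm_ring_hom \<psi>
    using comm_ring_hom_compose[OF comm_ring_hom_compose[OF comm_ring_hom_const_poly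
        comm_ring_hom_to_fract] comm_ring_hom_const_poly]
    by (simp add: \<psi>_def o_def)
  have E_f: "E (emb_F f) = fract_poly (mpoly_eval (\<lambda>c. [:[:c:]:]) (\<lambda>_. [:0, 1:]) f)"
    by (simp add: E_def emb_F_eq_map mpoly_eval_map fract_poly.hom_mpoly_eval o_def map_poly_pCons)
  have E_mconst: "E (mconst c) = [:c:]" for c
    by (simp add: E_def mpoly_eval_mconst)
  have E_emb_Feps: "E (emb_Feps p) = fract_poly (mpoly_eval (\<lambda>c. [:c:]) (\<lambda>_. [:0, 1:]) p)" for p
    by (simp add: E_def emb_Feps_eq_map mpoly_eval_map fract_poly.hom_mpoly_eval o_def map_poly_pCons)
  have E_eps_h: "E (mconst eps * emb_Feps h) =
      fract_poly (smult [:0, 1:] (mpoly_eval (\<lambda>c. [:c:]) (\<lambda>_. [:0, 1:]) h))"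
    by (simp add: E.hom_mult E_mconst E_emb_Feps eps_def to_fract_def)
  have "E (msubst \<sigma> (emb_F (g ^ 2))) = mpoly_eval (E \<circ> mconst) (E \<circ> \<sigma>) (emb_F (g ^ 2))"
    by (simp only: msubst_eq_mpoly_eval E.hom_mpoly_eval)
  also have "\<dots> = mpoly_eval \<psi> (E \<circ> \<sigma>) (g ^ 2)"
    by (simp add: E_mconst emb_F_eq_map mpoly_eval_map o_def \<psi>_def)
  also have "\<dots> = mpoly_eval \<psi> (E \<circ> \<sigma>) g ^ 2"
    by (rule comm_ring_hom.hom_power[OF \<psi>.comm_ring_hom_mpoly_eval])
  finally show ?thesis
    using arg_cong[OF eq, of E] E_f E_eps_h by (intro that) (simp add: E.hom_add)
qed

lemma HC_one: "HC 1 = mvar (1, 1)"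
proof -
  have "{\<pi>. is_ncycle 1 \<pi>} = {id}"
    by (auto simp: is_ncycle_def intro: exI[of _ 0])
  then show ?thesis
    by (simp add: HC_def)
qed

theorem lemma2:
  shows "\<not> border_p_le hc_vars (HC :: nat \<Rightarrow> (nat \<times> nat, 'a::field) mpoly) (\<lambda>n. (HC n) ^ 2)"
proof
  assume "border_p_le hc_vars (HC :: nat \<Rightarrow> (nat \<times> nat, 'a::field) mpoly) (\<lambda>n. (HC n) ^ 2)"
  then obtain m where "border_le (hc_vars 1) (HC 1 :: (nat \<times> nat, 'a) mpoly) (HC m ^ 2)"
    unfolding border_p_le_def by blast
  moreover have "mpoly_eval (\<lambda>c. [:[:c:]:]) (\<lambda>_. [:0, 1:]) (HC 1 :: (nat \<times> nat, 'a) mpoly) = [:0, 1:]"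
    unfolding HC_one by (rule mpoly_eval_mvar) (simp_all add: one_pCons)
  ultimately obtain H :: "'a poly poly" and P where "fract_poly ([:0, 1:] + smult [:0, 1:] H) = P ^ 2"
    by (metis border_le_square_evaluation)
  moreover have "odd (degree (map_poly (\<lambda>c. poly c 0) ([:0, 1:] + smult [:0, 1:] H)))"
    by (simp add: reduction_X_plus_smult_eps)
  ultimately show False
    using fract_poly_neq_square_if_odd_reduction by blast
qed

end
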